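(* Let $p$ be a positive integer and write $2p=3m+r$ with $r\in\{0,1,2\}$, and assume $m\ge 3$. Let $I$ be a configuration of $2p$ colored chips containing at least $m$ chips of each of the three colors (and no jokers or dominoes). Then there is a sequence of at most $p+4r+8\le p+16$ exchanges taking $I$ to a configuration with at least $p$ dominoes.
   Context: Game model: a configuration is a tuple $(a,b,c,x,d)$ of nonnegative integers: $a,b,c$ colored chips of three colors, $x$ jokers, $d$ dominoes. Exchanges: Rule 1: remove three chips, consisting of some number $j\in\{0,1,2,3\}$ of jokers together with $3-j$ colored chips of pairwise distinct colors, and add one domino and one joker. Rule 2: if $d\ge 3$, remove three dominoes and add seven jokers. *)

theory Defs
  imports Main
begin

text \<open>A configuration (a, b, c, x, d): a, b, c colored chips of the three colors,
  x jokers, d dominoes.\<close>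
type_synonym config = "nat \<times> nat \<times> nat \<times> nat \<times> nat"

fun dominoes :: "config \<Rightarrow> nat" where
  "dominoes (a, b, c, x, d) = d"

text \<open>One exchange. Rule 1 with j jokers (j = 0..3) and 3 - j colored chips of
  pairwise distinct colors: remove them, add one domino and one joker.
  Rule 2: remove three dominoes, add seven jokers.\<close>
inductive step :: "config \<Rightarrow> config \<Rightarrow> bool" where
  r1_j0:  "step (Suc a, Suc b, Suc c, x, d) (a, b, c, Suc x, Suc d)"
| r1_j1ab: "step (Suc a, Suc b, c, Suc x, d) (a, b, c, Suc x, Suc d)"
| r1_j1ac: "step (Suc a, b, Suc c, Suc x, d) (a, b, c, Suc x, Suc d)"
| r1_j1bc: "step (a, Suc b, Suc c, Suc x, d) (a, b, c, Suc x, Suc d)"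
| r1_j2a: "step (Suc a, b, c, Suc (Suc x), d) (a, b, c, Suc x, Suc d)"
| r1_j2b: "step (a, Suc b, c, Suc (Suc x), d) (a, b, c, Suc x, Suc d)"
| r1_j2c: "step (a, b, Suc c, Suc (Suc x), d) (a, b, c, Suc x, Suc d)"
| r1_j3:  "step (a, b, c, Suc (Suc (Suc x)), d) (a, b, c, Suc x, Suc d)"
| r2:     "step (a, b, c, x, Suc (Suc (Suc d))) (a, b, c, x + 7, d)"

end

theory Submission
  imports Defs
begin

text \<open>Write \<open>a = \<alpha> + m\<close>, \<open>b = \<beta> + m\<close>, \<open>c = \<gamma> + m\<close>, so that \<open>\<alpha> + \<beta> + \<gamma> = r\<close>.
  First \<open>m\<close> exchanges of three distinct colours leave \<open>r\<close> colored chips, \<open>m\<close> jokers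
  and \<open>m\<close> dominoes. Trading three dominoes for seven jokers once, every leftover
  chip is then paired with a joker, and the remaining \<open>m + 7 - r\<close> jokers
  (an odd number, as \<open>m \<equiv> r\<close> mod 2) are used up three at a time, each such
  exchange costing two of them. Writing \<open>m = r + 2h\<close>, this ends with exactly
  \<open>m + r + h = p\<close> dominoes after \<open>p + 4\<close> exchanges.\<close>

lemma steps_rule1_colours:
  "(step ^^ n) (a + n, b + n, c + n, x, d) (a, b, c, x + n, d + n)"
proof (induction n arbitrary: x d)
  case (Suc n)
  have "step (a + Suc n, b + Suc n, c + Suc n, x, d) (a + n, b + n, c + n, Suc x, Suc d)"
    using step.r1_j0 by simp
  from relpowp_Suc_I2[OF this Suc.IH] show ?case by simp
qed simp

lemma steps_rule1_colour_a:
  "(step ^^ n) (a + n, b, c, Suc x + n, d) (a, b, c, Suc x, d + n)"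
proof (induction n arbitrary: d)
  case (Suc n)
  have "step (a + Suc n, b, c, Suc x + Suc n, d) (a + n, b, c, Suc x + n, Suc d)"
    using step.r1_j2a by simp
  from relpowp_Suc_I2[OF this Suc.IH] show ?case by simp
qed simp

lemma steps_rule1_colour_b:
  "(step ^^ n) (a, b + n, c, Suc x + n, d) (a, b, c, Suc x, d + n)"
proof (induction n arbitrary: d)
  case (Suc n)
  have "step (a, b + Suc n, c, Suc x + Suc n, d) (a, b + n, c, Suc x + n, Suc d)"
    using step.r1_j2b by simp
  from relpowp_Suc_I2[OF this Suc.IH] show ?case by simp
qed simp

lemma steps_rule1_colour_c:
  "(step ^^ n) (a, b, c + n, Suc x + n, d) (a, b, c, Suc x, d + n)"
proof (induction n arbitrary: d)
  case (Suc n)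
  have "step (a, b, c + Suc n, Suc x + Suc n, d) (a, b, c + n, Suc x + n, Suc d)"
    using step.r1_j2c by simp
  from relpowp_Suc_I2[OF this Suc.IH] show ?case by simp
qed simp

lemma steps_rule1_three_jokers:
  "(step ^^ n) (a, b, c, Suc x + 2 * n, d) (a, b, c, Suc x, d + n)"
proof (induction n arbitrary: d)
  case (Suc n)
  have "step (a, b, c, Suc x + 2 * Suc n, d) (a, b, c, Suc x + 2 * n, Suc d)"
    using step.r1_j3 by simp
  from relpowp_Suc_I2[OF this Suc.IH] show ?case by simp
qed simp

lemma steps_clear_colours:
  "(step ^^ (a + b + c)) (a, b, c, Suc x + (a + b + c), d) (0, 0, 0, Suc x, d + (a + b + c))"
proof -
  have "(step ^^ a) (a, b, c, Suc x + (a + b + c), d) (0, b, c, Suc x + (b + c), d + a)"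
    using steps_rule1_colour_a[of a 0 b c "x + (b + c)" d] by (simp add: ac_simps)
  also have "(step ^^ b) \<dots> (0, 0, c, Suc x + c, d + a + b)"
    using steps_rule1_colour_b[of b 0 0 c "x + c" "d + a"] by (simp add: ac_simps)
  also have "(step ^^ c) \<dots> (0, 0, 0, Suc x, d + a + b + c)"
    using steps_rule1_colour_c[of c 0 0 0 x "d + a + b"] by (simp add: ac_simps)
  finally show ?thesis by (simp add: ac_simps)
qed

lemma steps_to_dominoes:
  assumes "\<alpha> + \<beta> + \<gamma> = r" and "m = r + 2 * h" and "3 \<le> m"
  shows "(step ^^ (m + r + h + 4)) (\<alpha> + m, \<beta> + m, \<gamma> + m, 0, 0) (0, 0, 0, 1, m + r + h)"
proof -
  obtain m' where m': "m = m' + 3"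
    using \<open>3 \<le> m\<close> le_Suc_ex by (metis add.commute)
  have "(step ^^ m) (\<alpha> + m, \<beta> + m, \<gamma> + m, 0, 0) (\<alpha>, \<beta>, \<gamma>, m, m)"
    using steps_rule1_colours[of m \<alpha> \<beta> \<gamma> 0 0] by simp
  also have "(step ^^ 1) \<dots> (\<alpha>, \<beta>, \<gamma>, m + 7, m')"
    unfolding relpowp_1 using step.r2[of \<alpha> \<beta> \<gamma> m m'] m' by (simp add: numeral_eq_Suc)
  also have "(step ^^ r) \<dots> (0, 0, 0, Suc (2 * (h + 3)), m' + r)"
    using steps_clear_colours[of \<alpha> \<beta> \<gamma> "2 * (h + 3)" m'] unfolding assms(1)
    by (simp add: assms(2) ac_simps)
  also have "(step ^^ (h + 3)) \<dots> (0, 0, 0, 1, m' + r + (h + 3))"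
    using steps_rule1_three_jokers[of "h + 3" 0 0 0 0 "m' + r"] by simp
  finally show ?thesis
    using m' by (simp add: ac_simps)
qed

theorem mainTheorem8:
  fixes p m r a b c :: nat
  assumes "p > 0"
    and "m = (2 * p) div 3" and "r = (2 * p) mod 3"
    and "m \<ge> 3"
    and "a + b + c = 2 * p"
    and "a \<ge> m" and "b \<ge> m" and "c \<ge> m"
  shows "(\<exists>k J. k \<le> p + 4 * r + 8 \<and> (step ^^ k) (a, b, c, 0, 0) J \<and> dominoes J \<ge> p)
         \<and> p + 4 * r + 8 \<le> p + 16"
proof -
  have "r \<le> 2" and division: "3 * m + r = 2 * p"
    using assms(2,3) by simp_all
  define h where "h = p - m - r"
  have h: "m = r + 2 * h" and p: "p = m + r + h"
    using division \<open>r \<le> 2\<close> \<open>m \<ge> 3\<close> unfolding h_def by arith+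
  obtain \<alpha> \<beta> \<gamma> where abc: "a = \<alpha> + m" "b = \<beta> + m" "c = \<gamma> + m"
    using assms(6-8) le_add_diff_inverse2 by metis
  have "\<alpha> + \<beta> + \<gamma> = r"
    using assms(5) abc division by arith
  from steps_to_dominoes[OF this h \<open>m \<ge> 3\<close>]
  have "(step ^^ (p + 4)) (a, b, c, 0, 0) (0, 0, 0, 1, p)"
    unfolding abc p .
  moreover have "p + 4 \<le> p + 4 * r + 8" and "p \<le> dominoes (0, 0, 0, 1, p)"
    and "p + 4 * r + 8 \<le> p + 16"
    using \<open>r \<le> 2\<close> by simp_all
  ultimately show ?thesis
    by blast
qed

end
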